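(* Let $\mathcal{X},\mathcal{A}$ be finite sets, and consider a stationary MFG $(\mathcal{X},\mathcal{A},p,r,\gamma)$ with $\gamma\in[0,1)$. For $\mu\in\Delta_{\mathcal{X}}$ and $\pi\in\Pi$, let $$J_\gamma(\pi;\mu)=\mathbb{E}\Big[\sum_{n\ge 0}\gamma^n r(x_n,a_n,\mu)\Big],\quad x_0\sim\mu,\ a_n\sim\pi(\cdot\mid x_n),\ x_{n+1}\sim p(\cdot\mid x_n,a_n,\mu),$$ and $\mathbf{BR}(\mu)=\operatorname{argmax}_{\pi\in\Pi}J_\gamma(\pi;\mu)$. Assume that (1) for every $\mu\in\Delta_{\mathcal{X}}$, $\mathbf{BR}(\mu)$ consists of a single policy $\pi^*_\mu$, and (2) the map $\Delta_{\mathcal{X}}\to\Pi$, $\mu\mapsto\pi^*_\mu$, is continuous (with $\Pi$ carrying its topology as a subset of $\mathbb{R}^{\mathcal{X}\times\mathcal{A}}$). Then this map is constant: there exists a single deterministic policy $\pi$ such that $\mathbf{BR}(\mu)=\{\pi\}$ for all $\mu\in\Delta_{\mathcal{X}}$.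
   Context: $\Delta_{\mathcal{L}}$ denotes the set of probability distributions on a finite set $\mathcal{L}$. $\Pi=(\Delta_{\mathcal{A}})^{\mathcal{X}}$ is the set of stationary policies, a policy $\pi$ mapping each state $x$ to a distribution $\pi(\cdot\mid x)\in\Delta_{\mathcal{A}}$; a policy is deterministic if each $\pi(\cdot\mid x)$ is a Dirac mass. The transition kernel is $p:\mathcal{X}\times\mathcal{A}\times\Delta_{\mathcal{X}}\to\Delta_{\mathcal{X}}$ and the reward is $r:\mathcal{X}\times\mathcal{A}\times\Delta_{\mathcal{X}}\to\mathbb{R}$; in $J_\gamma(\pi;\mu)$ the population distribution $\mu$ is held fixed. *)

theory Defs
  imports "HOL-Analysis.Analysis"
begin

definition distrs :: "('s::finite \<Rightarrow> real) set" where
  "distrs = {d. (\<forall>s. 0 \<le> d s) \<and> (\<Sum>s\<in>UNIV. d s) = 1}"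

definition policies :: "('x::finite \<Rightarrow> 'a::finite \<Rightarrow> real) set" where
  "policies = {pol. \<forall>x. pol x \<in> distrs}"

definition deterministic :: "('x::finite \<Rightarrow> 'a::finite \<Rightarrow> real) \<Rightarrow> bool" where
  "deterministic pol \<longleftrightarrow> (\<forall>x. \<exists>a. pol x = (\<lambda>b. if b = a then 1 else 0))"

text \<open>Law of the state x_n: x_0 ~ mu, a_n ~ pol(.|x_n), x_{n+1} ~ p(.|x_n,a_n,mu),
  with the population distribution mu frozen in the kernel.\<close>
fun state_law ::
  "('x::finite \<Rightarrow> 'a::finite \<Rightarrow> ('x \<Rightarrow> real) \<Rightarrow> 'x \<Rightarrow> real) \<Rightarrow>
   ('x \<Rightarrow> 'a \<Rightarrow> real) \<Rightarrow> ('x \<Rightarrow> real) \<Rightarrow> nat \<Rightarrow> 'x \<Rightarrow> real" where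
  "state_law p pol mu 0 = mu"
| "state_law p pol mu (Suc n) =
     (\<lambda>y. \<Sum>x\<in>UNIV. \<Sum>a\<in>UNIV. state_law p pol mu n x * pol x a * p x a mu y)"

text \<open>J_gamma(pol; mu) = E[sum_n gamma^n r(x_n,a_n,mu)], written via the laws of (x_n,a_n).\<close>
definition J ::
  "('x::finite \<Rightarrow> 'a::finite \<Rightarrow> ('x \<Rightarrow> real) \<Rightarrow> 'x \<Rightarrow> real) \<Rightarrow>
   ('x \<Rightarrow> 'a \<Rightarrow> ('x \<Rightarrow> real) \<Rightarrow> real) \<Rightarrow> real \<Rightarrow>
   ('x \<Rightarrow> 'a \<Rightarrow> real) \<Rightarrow> ('x \<Rightarrow> real) \<Rightarrow> real" where
  "J p r \<gamma> pol mu = (\<Sum>n. \<gamma> ^ n *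
      (\<Sum>x\<in>UNIV. \<Sum>a\<in>UNIV. state_law p pol mu n x * pol x a * r x a mu))"

definition BR ::
  "('x::finite \<Rightarrow> 'a::finite \<Rightarrow> ('x \<Rightarrow> real) \<Rightarrow> 'x \<Rightarrow> real) \<Rightarrow>
   ('x \<Rightarrow> 'a \<Rightarrow> ('x \<Rightarrow> real) \<Rightarrow> real) \<Rightarrow> real \<Rightarrow>
   ('x \<Rightarrow> real) \<Rightarrow> ('x \<Rightarrow> 'a \<Rightarrow> real) set" where
  "BR p r \<gamma> mu = {pol \<in> policies. \<forall>pol' \<in> policies. J p r \<gamma> pol' mu \<le> J p r \<gamma> pol mu}"

end

(* A unique best response is deterministic: changing it at one state x to an action that is
   greedy for its own action-value function makes its old state values a Bellman subsolution for
   the new policy, hence does not decrease the return, so by uniqueness the change is trivial.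
   Therefore mu -> pi*_mu maps the path-connected simplex continuously into the finite set of
   deterministic policies, and a connected subset of a finite set is a single point. *)

theory Submission
  imports Defs
begin

definition dirac :: "'a \<Rightarrow> 'a \<Rightarrow> real" where
  "dirac a = (\<lambda>b. if b = a then 1 else 0)"

lemma dirac_in_distrs: "dirac a \<in> distrs"
  by (simp add: distrs_def dirac_def)

lemma sum_dirac_mult [simp]: "(\<Sum>b\<in>UNIV. dirac (a :: 'a::finite) b * f b) = f a"
  by (simp add: dirac_def if_distrib[of "\<lambda>t. t * _"] cong: if_cong)

lemma sum_mult_dirac [simp]: "(\<Sum>b\<in>UNIV. f b * dirac b (a :: 'a::finite)) = f a"
  by (simp add: dirac_def if_distrib[of "\<lambda>t. _ * t"] cong: if_cong)

lemma deterministic_iff_dirac: "deterministic pol \<longleftrightarrow> (\<forall>x. \<exists>a. pol x = dirac a)"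
  by (simp add: deterministic_def dirac_def)

lemma distrs_nonneg: "m \<in> distrs \<Longrightarrow> 0 \<le> m x"
  by (simp add: distrs_def)

lemma distrs_sum: "m \<in> distrs \<Longrightarrow> (\<Sum>x\<in>UNIV. m x) = 1"
  by (simp add: distrs_def)

lemma distrs_le_one: "m \<in> distrs \<Longrightarrow> m x \<le> 1"
  using member_le_sum[of x UNIV m] by (auto simp: distrs_def)

lemma abs_sum_distrs_le:
  assumes "m \<in> distrs"
  shows "\<bar>\<Sum>x\<in>UNIV. m x * f x\<bar> \<le> (\<Sum>x\<in>UNIV. \<bar>f x\<bar>)"
proof -
  have "\<bar>\<Sum>x\<in>UNIV. m x * f x\<bar> \<le> (\<Sum>x\<in>UNIV. m x * \<bar>f x\<bar>)"
    using sum_abs[of "\<lambda>x. m x * f x"] distrs_nonneg[OF assms] by (simp add: abs_mult)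
  also have "\<dots> \<le> (\<Sum>x\<in>UNIV. \<bar>f x\<bar>)"
    using distrs_nonneg[OF assms] distrs_le_one[OF assms]
    by (intro sum_mono mult_left_le_one_le) auto
  finally show ?thesis .
qed

lemma mixture_in_distrs:
  assumes "m \<in> distrs" and "\<And>x. K x \<in> distrs"
  shows "(\<lambda>y. \<Sum>x\<in>UNIV. m x * K x y) \<in> distrs"
proof -
  have "(\<Sum>y\<in>UNIV. \<Sum>x\<in>UNIV. m x * K x y) = (\<Sum>x\<in>UNIV. m x * (\<Sum>y\<in>UNIV. K x y))"
    by (subst sum.swap) (simp add: sum_distrib_left)
  then show ?thesis
    using assms by (auto simp: distrs_def intro!: sum_nonneg)
qed

lemma connected_distrs: "connected (distrs :: ('x::finite \<Rightarrow> real) set)"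
proof (rule path_connected_imp_connected, unfold path_connected_def, intro ballI)
  fix m0 m1 :: "'x \<Rightarrow> real"
  assume m0: "m0 \<in> distrs" and m1: "m1 \<in> distrs"
  define g where "g t = (\<lambda>y. (1 - t) * m0 y + t * m1 y)" for t :: real
  have "g t \<in> distrs" if t: "0 \<le> t" "t \<le> 1" for t
  proof -
    have "(\<Sum>y\<in>UNIV. g t y) = (1 - t) * (\<Sum>y\<in>UNIV. m0 y) + t * (\<Sum>y\<in>UNIV. m1 y)"
      by (simp add: g_def sum.distrib sum_distrib_left)
    moreover have "0 \<le> g t y" for y
      unfolding g_def using t distrs_nonneg[OF m0] distrs_nonneg[OF m1] by simp
    ultimately show ?thesis
      using distrs_sum[OF m0] distrs_sum[OF m1] by (simp add: distrs_def)
  qed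
  then have "path_image g \<subseteq> distrs"
    by (auto simp: path_image_def)
  moreover have "path g"
    unfolding path_def g_def by (intro continuous_on_coordinatewise_then_product continuous_intros)
  moreover have "pathstart g = m0" "pathfinish g = m1"
    by (simp_all add: pathstart_def pathfinish_def g_def)
  ultimately show "\<exists>g. path g \<and> path_image g \<subseteq> distrs \<and> pathstart g = m0 \<and> pathfinish g = m1"
    by blast
qed

lemma finite_deterministic: "finite {pol :: 'x::finite \<Rightarrow> 'a::finite \<Rightarrow> real. deterministic pol}"
proof (rule finite_subset)
  show "{pol. deterministic pol} \<subseteq> range (\<lambda>f :: 'x \<Rightarrow> 'a. \<lambda>x. dirac (f x))"
  proof
    fix pol :: "'x \<Rightarrow> 'a \<Rightarrow> real"
    assume "pol \<in> {pol. deterministic pol}"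
    then obtain f where "\<forall>x. pol x = dirac (f x)"
      using choice[of "\<lambda>x a. pol x = dirac a"] by (auto simp: deterministic_iff_dirac)
    then show "pol \<in> range (\<lambda>f x. dirac (f x))" by auto
  qed
qed simp

lemma summable_power_mult_bounded:
  fixes g :: real
  assumes "\<bar>g\<bar> < 1" and "\<And>n. \<bar>f n\<bar> \<le> B"
  shows "summable (\<lambda>n. g ^ n * f n)"
proof (rule summable_comparison_test')
  show "summable (\<lambda>n. B * \<bar>g\<bar> ^ n)"
    using assms(1) by (intro summable_mult summable_geometric) simp
  show "norm (g ^ n * f n) \<le> B * \<bar>g\<bar> ^ n" for n
    using assms(2)[of n] by (simp add: abs_mult power_abs mult.commute mult_right_mono)
qed

locale discounted_mdp =
  fixes P :: "'x::finite \<Rightarrow> 'a::finite \<Rightarrow> 'x \<Rightarrow> real"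
    and R :: "'x \<Rightarrow> 'a \<Rightarrow> real"
    and \<gamma> :: real
  assumes discount_nonneg: "0 \<le> \<gamma>"
    and discount_less_one: "\<gamma> < 1"
    and kernel_in_distrs: "P x a \<in> distrs"
begin

definition policy_kernel :: "('x \<Rightarrow> 'a \<Rightarrow> real) \<Rightarrow> 'x \<Rightarrow> 'x \<Rightarrow> real" where
  "policy_kernel pol x = (\<lambda>y. \<Sum>a\<in>UNIV. pol x a * P x a y)"

definition policy_reward :: "('x \<Rightarrow> 'a \<Rightarrow> real) \<Rightarrow> 'x \<Rightarrow> real" where
  "policy_reward pol x = (\<Sum>a\<in>UNIV. pol x a * R x a)"

primrec state_distr :: "('x \<Rightarrow> 'a \<Rightarrow> real) \<Rightarrow> ('x \<Rightarrow> real) \<Rightarrow> nat \<Rightarrow> 'x \<Rightarrow> real" where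
  "state_distr pol m 0 = m"
| "state_distr pol m (Suc n) =
     (\<lambda>y. \<Sum>x\<in>UNIV. state_distr pol m n x * policy_kernel pol x y)"

definition expected_return :: "('x \<Rightarrow> 'a \<Rightarrow> real) \<Rightarrow> ('x \<Rightarrow> real) \<Rightarrow> real" where
  "expected_return pol m =
     (\<Sum>n. \<gamma> ^ n * (\<Sum>x\<in>UNIV. state_distr pol m n x * policy_reward pol x))"

definition state_value :: "('x \<Rightarrow> 'a \<Rightarrow> real) \<Rightarrow> 'x \<Rightarrow> real" where
  "state_value pol x = expected_return pol (dirac x)"

definition action_value :: "('x \<Rightarrow> real) \<Rightarrow> 'x \<Rightarrow> 'a \<Rightarrow> real" where
  "action_value V x a = R x a + \<gamma> * (\<Sum>y\<in>UNIV. P x a y * V y)"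

lemma policy_kernel_in_distrs: "pol \<in> policies \<Longrightarrow> policy_kernel pol x \<in> distrs"
  unfolding policy_kernel_def policies_def by (simp add: mixture_in_distrs kernel_in_distrs)

lemma state_distr_in_distrs:
  "pol \<in> policies \<Longrightarrow> m \<in> distrs \<Longrightarrow> state_distr pol m n \<in> distrs"
  by (induction n) (simp_all add: mixture_in_distrs policy_kernel_in_distrs)

lemma state_distr_Suc_shift:
  "state_distr pol m (Suc n) = state_distr pol (state_distr pol m 1) n"
  by (induction n) simp_all

lemma state_distr_linear:
  "state_distr pol m n y = (\<Sum>z\<in>UNIV. m z * state_distr pol (dirac z) n y)"
proof (induction n arbitrary: y)
  case 0
  then show ?case by simp
next
  case (Suc n)
  then show ?case
    by (simp add: sum_distrib_left sum_distrib_right mult.assoc) (rule sum.swap)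
qed

lemma summable_expected_return:
  assumes "pol \<in> policies" and "m \<in> distrs"
  shows "summable (\<lambda>n. \<gamma> ^ n * (\<Sum>x\<in>UNIV. state_distr pol m n x * policy_reward pol x))"
proof (rule summable_power_mult_bounded)
  show "\<bar>\<gamma>\<bar> < 1"
    using discount_nonneg discount_less_one by simp
  show "\<bar>\<Sum>x\<in>UNIV. state_distr pol m n x * policy_reward pol x\<bar> \<le>
      (\<Sum>x\<in>UNIV. \<bar>policy_reward pol x\<bar>)" for n
    by (intro abs_sum_distrs_le state_distr_in_distrs assms)
qed

lemma expected_return_linear:
  assumes pol: "pol \<in> policies"
  shows "expected_return pol m = (\<Sum>z\<in>UNIV. m z * state_value pol z)"
proof -
  define r where
    "r z n = \<gamma> ^ n * (\<Sum>x\<in>UNIV. state_distr pol (dirac z) n x * policy_reward pol x)" for z n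
  have "\<gamma> ^ n * (\<Sum>x\<in>UNIV. state_distr pol m n x * policy_reward pol x) =
      (\<Sum>z\<in>UNIV. m z * r z n)" for n
    unfolding r_def
    by (subst state_distr_linear) (simp add: sum_distrib_left sum_distrib_right mult_ac, rule sum.swap)
  then have "expected_return pol m = (\<Sum>n. \<Sum>z\<in>UNIV. m z * r z n)"
    by (simp add: expected_return_def)
  also have "\<dots> = (\<Sum>z\<in>UNIV. \<Sum>n. m z * r z n)"
    unfolding r_def by (intro suminf_sum summable_mult summable_expected_return pol dirac_in_distrs)
  also have "\<dots> = (\<Sum>z\<in>UNIV. m z * state_value pol z)"
    unfolding r_def state_value_def expected_return_def
    by (intro sum.cong refl suminf_mult summable_expected_return pol dirac_in_distrs)
  finally show ?thesis .
qed

lemma expected_return_unfold: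
  assumes pol: "pol \<in> policies" and m: "m \<in> distrs"
  shows "expected_return pol m =
    (\<Sum>x\<in>UNIV. m x * policy_reward pol x) + \<gamma> * expected_return pol (state_distr pol m 1)"
proof -
  define f where "f n = \<gamma> ^ n * (\<Sum>x\<in>UNIV. state_distr pol m n x * policy_reward pol x)" for n
  have "(\<Sum>n. f (Suc n)) = (\<Sum>n. \<gamma> * (\<gamma> ^ n *
      (\<Sum>x\<in>UNIV. state_distr pol (state_distr pol m 1) n x * policy_reward pol x)))"
    unfolding f_def state_distr_Suc_shift[of pol m] by (simp add: mult.assoc)
  also have "\<dots> = \<gamma> * expected_return pol (state_distr pol m 1)"
    unfolding expected_return_def
    by (intro suminf_mult summable_expected_return pol state_distr_in_distrs m)
  finally have "(\<Sum>n. f (Suc n)) = \<gamma> * expected_return pol (state_distr pol m 1)" .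
  moreover have "(\<Sum>n. f (Suc n)) = expected_return pol m - f 0"
    unfolding f_def expected_return_def by (intro suminf_split_head summable_expected_return pol m)
  ultimately show ?thesis
    by (simp add: f_def)
qed

lemma state_value_bellman:
  assumes pol: "pol \<in> policies"
  shows "state_value pol x =
    policy_reward pol x + \<gamma> * (\<Sum>y\<in>UNIV. policy_kernel pol x y * state_value pol y)"
proof -
  have "state_distr pol (dirac x) 1 = policy_kernel pol x"
    by (simp add: fun_eq_iff)
  then have "expected_return pol (state_distr pol (dirac x) 1) =
      (\<Sum>y\<in>UNIV. policy_kernel pol x y * state_value pol y)"
    by (simp only: expected_return_linear[OF pol])
  then show ?thesis
    unfolding state_value_def by (simp add: expected_return_unfold[OF pol dirac_in_distrs])
qed

lemma sum_policy_action_value: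
  "(\<Sum>a\<in>UNIV. pol x a * action_value V x a) =
    policy_reward pol x + \<gamma> * (\<Sum>y\<in>UNIV. policy_kernel pol x y * V y)"
proof -
  have "(\<Sum>y\<in>UNIV. policy_kernel pol x y * V y) =
      (\<Sum>a\<in>UNIV. pol x a * (\<Sum>y\<in>UNIV. P x a y * V y))"
    unfolding policy_kernel_def by (simp add: sum_distrib_left sum_distrib_right mult.assoc) (rule sum.swap)
  then show ?thesis
    unfolding action_value_def policy_reward_def
    by (simp add: distrib_left sum.distrib sum_distrib_left mult.left_commute)
qed

lemma bellman_subsolution_le_expected_return:
  assumes pol: "pol \<in> policies" and m: "m \<in> distrs"
    and sub: "\<And>x. V x \<le> policy_reward pol x + \<gamma> * (\<Sum>y\<in>UNIV. policy_kernel pol x y * V y)"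
  shows "(\<Sum>x\<in>UNIV. m x * V x) \<le> expected_return pol m"
proof -
  define h where "h n = (\<Sum>x\<in>UNIV. state_distr pol m n x * V x)" for n
  define r where "r n = (\<Sum>x\<in>UNIV. state_distr pol m n x * policy_reward pol x)" for n
  have distr: "state_distr pol m n \<in> distrs" for n
    by (rule state_distr_in_distrs[OF pol m])
  have "h n \<le> (\<Sum>x\<in>UNIV. state_distr pol m n x *
      (policy_reward pol x + \<gamma> * (\<Sum>y\<in>UNIV. policy_kernel pol x y * V y)))" for n
    unfolding h_def by (intro sum_mono mult_left_mono sub distrs_nonneg[OF distr])
  also have "\<dots> n = r n + \<gamma> * h (Suc n)" for n
    unfolding r_def h_def
    by (simp add: distrib_left sum.distrib sum_distrib_left sum_distrib_right mult_ac) (rule sum.swap)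
  finally have step: "h n \<le> r n + \<gamma> * h (Suc n)" for n .
  have "summable (\<lambda>n. \<gamma> ^ n * h n)"
    unfolding h_def using discount_nonneg discount_less_one
    by (intro summable_power_mult_bounded[where B = "\<Sum>x\<in>UNIV. \<bar>V x\<bar>"] abs_sum_distrs_le distr) simp
  from telescope_sums'[OF summable_LIMSEQ_zero[OF this]]
  have telescope: "(\<lambda>n. \<gamma> ^ n * h n - \<gamma> ^ Suc n * h (Suc n)) sums (h 0)"
    by simp
  have return: "(\<lambda>n. \<gamma> ^ n * r n) sums expected_return pol m"
    unfolding r_def expected_return_def by (intro summable_sums summable_expected_return pol m)
  have "\<gamma> ^ n * h n - \<gamma> ^ Suc n * h (Suc n) \<le> \<gamma> ^ n * r n" for n
    using mult_left_mono[OF step[of n] zero_le_power[OF discount_nonneg, of n]]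
    by (simp add: algebra_simps)
  from sums_le[OF this telescope return] show ?thesis
    by (simp add: h_def)
qed

lemma greedy_update_improves:
  assumes pol: "pol \<in> policies" and m: "m \<in> distrs"
    and greedy: "\<And>b. action_value (state_value pol) x b \<le> action_value (state_value pol) x a"
  shows "expected_return pol m \<le> expected_return (pol(x := dirac a)) m"
proof -
  let ?pol' = "pol(x := dirac a)" and ?V = "state_value pol"
  have pol_x: "pol x \<in> distrs"
    using pol by (simp add: policies_def)
  have pol': "?pol' \<in> policies"
    using pol by (simp add: policies_def dirac_in_distrs)
  have greedy_sub: "?V y \<le> (\<Sum>b\<in>UNIV. ?pol' y b * action_value ?V y b)" for y
  proof (cases "y = x")
    case True
    have "?V x = (\<Sum>b\<in>UNIV. pol x b * action_value ?V x b)"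
      unfolding sum_policy_action_value by (rule state_value_bellman[OF pol])
    also have "\<dots> \<le> (\<Sum>b\<in>UNIV. pol x b * action_value ?V x a)"
      by (intro sum_mono mult_left_mono greedy distrs_nonneg[OF pol_x])
    also have "\<dots> = action_value ?V x a"
      by (simp add: sum_distrib_right[symmetric] distrs_sum[OF pol_x])
    finally show ?thesis
      using True by simp
  next
    case False
    then show ?thesis
      unfolding sum_policy_action_value using state_value_bellman[OF pol, of y]
      by (simp add: policy_reward_def policy_kernel_def)
  qed
  have "?V y \<le> policy_reward ?pol' y + \<gamma> * (\<Sum>z\<in>UNIV. policy_kernel ?pol' y z * ?V z)"
    for y
    using greedy_sub[of y] unfolding sum_policy_action_value .
  then have "(\<Sum>y\<in>UNIV. m y * ?V y) \<le> expected_return ?pol' m"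
    by (rule bellman_subsolution_le_expected_return[OF pol' m])
  then show ?thesis
    by (simp add: expected_return_linear[OF pol])
qed

lemma deterministic_if_unique_weak_improvement:
  assumes pol: "pol \<in> policies" and m: "m \<in> distrs"
    and unique: "\<And>pol'. pol' \<in> policies \<Longrightarrow>
      expected_return pol m \<le> expected_return pol' m \<Longrightarrow> pol' = pol"
  shows "deterministic pol"
  unfolding deterministic_iff_dirac
proof
  fix x
  let ?Q = "action_value (state_value pol) x"
  have "Max (range ?Q) \<in> range ?Q"
    by (rule Max_in) simp_all
  then obtain a where a: "Max (range ?Q) = ?Q a"
    by blast
  have greedy: "?Q b \<le> ?Q a" for b
    unfolding a[symmetric] by (rule Max_ge) simp_all
  have "pol(x := dirac a) = pol"
    using pol by (intro unique greedy_update_improves[OF pol m greedy])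
      (simp add: policies_def dirac_in_distrs)
  then show "\<exists>a. pol x = dirac a"
    by (metis fun_upd_same)
qed

lemma J_eq_expected_return:
  assumes "\<And>x a. p x a mu = P x a" and "\<And>x a. r x a mu = R x a"
  shows "J p r \<gamma> pol mu = expected_return pol mu"
proof -
  have "state_law p pol mu n = state_distr pol mu n" for n
    by (induction n) (simp_all add: assms policy_kernel_def sum_distrib_left mult.assoc)
  then show ?thesis
    by (simp add: J_def expected_return_def policy_reward_def assms sum_distrib_left mult.assoc)
qed

end

lemma BR_singleton_deterministic:
  assumes "0 \<le> \<gamma>" "\<gamma> < 1" and "\<And>x a. p x a mu \<in> distrs" and mu: "mu \<in> distrs"
    and BR: "BR p r \<gamma> mu = {pol}"
  shows "deterministic pol"
proof -
  interpret discounted_mdp "\<lambda>x a. p x a mu" "\<lambda>x a. r x a mu" \<gamma>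
    using assms by unfold_locales
  have J: "J p r \<gamma> pol' mu = expected_return pol' mu" for pol'
    by (rule J_eq_expected_return) simp_all
  have pol: "pol \<in> policies"
    and optimal: "\<And>pol'. pol' \<in> policies \<Longrightarrow> J p r \<gamma> pol' mu \<le> J p r \<gamma> pol mu"
    using BR by (auto simp: BR_def)
  show ?thesis
  proof (rule deterministic_if_unique_weak_improvement[OF pol mu])
    fix pol' assume "pol' \<in> policies" and "expected_return pol mu \<le> expected_return pol' mu"
    then have "pol' \<in> BR p r \<gamma> mu"
      using optimal by (auto simp: BR_def J intro: order_trans)
    then show "pol' = pol"
      using BR by simp
  qed
qed

theorem mainTheorem2:
  fixes p :: "'x::finite \<Rightarrow> 'a::finite \<Rightarrow> ('x \<Rightarrow> real) \<Rightarrow> 'x \<Rightarrow> real"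
    and r :: "'x \<Rightarrow> 'a \<Rightarrow> ('x \<Rightarrow> real) \<Rightarrow> real"
    and \<gamma> :: real
    and br :: "('x \<Rightarrow> real) \<Rightarrow> ('x \<Rightarrow> 'a \<Rightarrow> real)"
  assumes gamma: "0 \<le> \<gamma>" "\<gamma> < 1"
    and kernel: "\<And>x a mu. mu \<in> distrs \<Longrightarrow> p x a mu \<in> distrs"
    and unique: "\<And>mu. mu \<in> distrs \<Longrightarrow> BR p r \<gamma> mu = {br mu}"
    and cont: "continuous_on distrs br"
  shows "\<exists>pol. deterministic pol \<and> (\<forall>mu \<in> distrs. BR p r \<gamma> mu = {pol})"
proof -
  have "br ` distrs \<subseteq> {pol. deterministic pol}"
    using BR_singleton_deterministic[OF gamma kernel _ unique] by auto
  then have "finite (br ` distrs)"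
    using finite_deterministic finite_subset by blast
  moreover have "connected (br ` distrs)"
    by (rule connected_continuous_image[OF cont connected_distrs])
  moreover have "br ` distrs \<noteq> {}"
    using dirac_in_distrs by blast
  ultimately obtain pol where "br ` distrs = {pol}"
    using connected_finite_iff_sing by blast
  then show ?thesis
    using \<open>br ` distrs \<subseteq> {pol. deterministic pol}\<close> unique by auto
qed

end
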